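(* Let $r\ge1$. The constructions $(Q,E)\mapsto X_{(Q,E)}$ and $X\mapsto(Q_X,E_X)$ (defined in the context) give a one-to-one correspondence, up to isomorphism, between $r$-VASSes and $\mathcal V_r$-presheaves $X$ that are finitely generated and have no double edges, i.e. such that for all $\mathsf u\in\mathbb Z^r$ and distinct $e_1,e_2\in X[(\mathsf u,\mathsf 0)]$ one has $X[(\sigma_{\mathsf u},\iota_{\mathsf 0}^{\mathsf 0})](e_1)\ne X[(\sigma_{\mathsf u},\iota_{\mathsf 0}^{\mathsf 0})](e_2)$ or $X[(\tau_{\mathsf u},\iota_{\mathsf 0}^{\mathsf 0})](e_1)\ne X[(\tau_{\mathsf u},\iota_{\mathsf 0}^{\mathsf 0})](e_2)$. That is, $(Q_{X_{(Q,E)}},E_{X_{(Q,E)}})$ is isomorphic to $(Q,E)$ for every $r$-VASS, and $X\cong X_{(Q_X,E_X)}$ for every such presheaf $X$.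
   Context: An $r$-VASS is a pair $(Q,E)$ with $Q$ a finite set and $E\subseteq Q\times\mathbb Z^r\times Q$ finite; write $e=(\mathrm{src}(e),\mathrm{vec}(e),\mathrm{tgt}(e))$. For an alphabet $\Sigma$ not containing the symbol $\emptyset$, $\mathcal G(\Sigma)$ is the category with objects $\{\emptyset\}\cup\Sigma$, only identity endomorphisms, $\mathcal G(\emptyset,a)=\{\sigma_a,\tau_a\}$ and $\mathcal G(a,\emptyset)=\emptyset$ for $a\in\Sigma$, and no morphisms between distinct letters. For a set $A$, $\mathcal F(A)$ is the category with object set $A$ and exactly one morphism $\iota_a^b:a\to b$ for all $a,b\in A$. $\mathcal V_r$ is the category $\mathcal G(\mathbb Z^r)\times\mathcal F(\mathbb N^r)$ (with d-structure: formorphisms the identities and the $(\sigma_{\mathsf u},\iota^{\mathsf v}_{\mathsf u^-+\mathsf v}):(\emptyset,\mathsf u^-+\mathsf v)\to(\mathsf u,\mathsf v)$, backmorphisms the identities and $(\tau_{\mathsf u},\iota^{\mathsf v}_{\mathsf u^++\mathsf v}):(\emptyset,\mathsf u^++\mathsf v)\to(\mathsf u,\mathsf v)$, where $\mathsf u=\mathsf u^+-\mathsf u^-$ with $\mathsf u^\pm\in\mathbb N^r$ the positive and negative parts). A $\mathcal V_r$-presheaf is a functor $X:\mathcal V_r^{op}\to\mathbf{Set}$; it is finitely generated if $X\cong\operatorname{colim}_{e\in\mathcal E}\mathcal V_r(-,G(e))$ for some finite category $\mathcal E$ and functor $G:\mathcal E\to\mathcal V_r$. For an $r$-VASS $(Q,E)$,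 $X_{(Q,E)}$ is given by $X[(\emptyset,\mathsf v)]=Q\times\{\mathsf v\}$, $X[(\mathsf u,\mathsf v)]=\{(e,\mathsf v)\mid e\in E,\mathrm{vec}(e)=\mathsf u\}$, $X[(\mathrm{id}_\emptyset,\iota_{\mathsf w}^{\mathsf v})](q,\mathsf v)=(q,\mathsf w)$, $X[(\mathrm{id}_{\mathsf u},\iota_{\mathsf w}^{\mathsf v})](e,\mathsf v)=(e,\mathsf w)$, $X[(\sigma_{\mathsf u},\iota_{\mathsf w}^{\mathsf v})](e,\mathsf v)=(\mathrm{src}(e),\mathsf w)$, $X[(\tau_{\mathsf u},\iota_{\mathsf w}^{\mathsf v})](e,\mathsf v)=(\mathrm{tgt}(e),\mathsf w)$. For a $\mathcal V_r$-presheaf $X$, $Q_X=X[(\emptyset,\mathsf 0)]$ and $E_X=\bigcup_{\mathsf u\in\mathbb Z^r}\{(X[(\sigma_{\mathsf u},\iota_{\mathsf 0}^{\mathsf 0})](e),\mathsf u,X[(\tau_{\mathsf u},\iota_{\mathsf 0}^{\mathsf 0})](e))\mid e\in X[(\mathsf u,\mathsf 0)]\}$. *)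

theory Defs
  imports Main
begin

section \<open>The category V_r = G(Z^r) x F(N^r)\<close>

text \<open>Elements of Z^r are int lists of length r, elements of N^r nat lists of length r.
  An object of G(Z^r) is None (the symbol emptyset) or Some u.  Morphisms of G(Z^r): identities GId o, and sigma_u, tau_u : emptyset -> u.
  The unique morphism iota_a^b : a -> b of F(N^r) is represented by the pair (a, b).\<close>

datatype gmor = GId "int list option" | Sig "int list" | Tau "int list"

type_synonym vobj = "int list option \<times> nat list"
type_synonym vmor = "gmor \<times> (nat list \<times> nat list)"

fun gdom :: "gmor \<Rightarrow> int list option" where
  "gdom (GId o') = o'" | "gdom (Sig u) = None" | "gdom (Tau u) = None"

fun gcod :: "gmor \<Rightarrow> int list option" where
  "gcod (GId o') = o'" | "gcod (Sig u) = Some u" | "gcod (Tau u) = Some u"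

text \<open>composition g o f (f first); only meaningful when cod f = dom g\<close>
fun gcomp :: "gmor \<Rightarrow> gmor \<Rightarrow> gmor" where
  "gcomp (GId x) f = f"
| "gcomp g (GId x) = g"
| "gcomp g f = undefined"

definition vdom :: "vmor \<Rightarrow> vobj" where
  "vdom f = (gdom (fst f), fst (snd f))"

definition vcod :: "vmor \<Rightarrow> vobj" where
  "vcod f = (gcod (fst f), snd (snd f))"

definition vcomp :: "vmor \<Rightarrow> vmor \<Rightarrow> vmor" where
  "vcomp g f = (gcomp (fst g) (fst f), (fst (snd f), snd (snd g)))"

definition vid :: "vobj \<Rightarrow> vmor" where
  "vid c = (GId (fst c), (snd c, snd c))"

definition is_vobj :: "nat \<Rightarrow> vobj \<Rightarrow> bool" where
  "is_vobj r c \<longleftrightarrow> length (snd c) = r \<and> (\<forall>u. fst c = Some u \<longrightarrow> length u = r)"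

definition is_vmor :: "nat \<Rightarrow> vmor \<Rightarrow> bool" where
  "is_vmor r f \<longleftrightarrow> is_vobj r (vdom f) \<and> is_vobj r (vcod f)"

definition vhom :: "nat \<Rightarrow> vobj \<Rightarrow> vobj \<Rightarrow> vmor set" where
  "vhom r c d = {f. is_vmor r f \<and> vdom f = c \<and> vcod f = d}"

text \<open>A presheaf X : V_r^op -> Set is given by its object part Xo and its action Xm:
  for f : c -> d, Xm f maps Xo d to Xo c.\<close>

definition is_presheaf :: "nat \<Rightarrow> (vobj \<Rightarrow> 'x set) \<Rightarrow> (vmor \<Rightarrow> 'x \<Rightarrow> 'x) \<Rightarrow> bool" where
  "is_presheaf r Xo Xm \<longleftrightarrow>
     (\<forall>f. is_vmor r f \<longrightarrow> Xm f ` Xo (vcod f) \<subseteq> Xo (vdom f)) \<and>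
     (\<forall>c. is_vobj r c \<longrightarrow> (\<forall>x\<in>Xo c. Xm (vid c) x = x)) \<and>
     (\<forall>f g. is_vmor r f \<and> is_vmor r g \<and> vcod f = vdom g \<longrightarrow>
        (\<forall>x\<in>Xo (vcod g). Xm (vcomp g f) x = Xm f (Xm g x)))"

definition presheaf_iso :: "nat \<Rightarrow> (vobj \<Rightarrow> 'x set) \<Rightarrow> (vmor \<Rightarrow> 'x \<Rightarrow> 'x)
    \<Rightarrow> (vobj \<Rightarrow> 'y set) \<Rightarrow> (vmor \<Rightarrow> 'y \<Rightarrow> 'y) \<Rightarrow> bool" where
  "presheaf_iso r Xo Xm Yo Ym \<longleftrightarrow>
     (\<exists>\<phi> :: vobj \<Rightarrow> 'x \<Rightarrow> 'y.
        (\<forall>c. is_vobj r c \<longrightarrow> bij_betw (\<phi> c) (Xo c) (Yo c)) \<and>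
        (\<forall>f. is_vmor r f \<longrightarrow> (\<forall>x\<in>Xo (vcod f). \<phi> (vdom f) (Xm f x) = Ym f (\<phi> (vcod f) x))))"

text \<open>A finite category (objects and morphisms coded as natural numbers; every finite
  category is isomorphic to one of this form).\<close>
record fcat =
  cOb :: "nat set"
  cMor :: "nat set"
  cdom :: "nat \<Rightarrow> nat"
  ccod :: "nat \<Rightarrow> nat"
  cid :: "nat \<Rightarrow> nat"
  ccomp :: "nat \<Rightarrow> nat \<Rightarrow> nat"

definition is_fin_cat :: "fcat \<Rightarrow> bool" where
  "is_fin_cat C \<longleftrightarrow>
     finite (cOb C) \<and> finite (cMor C) \<and>
     (\<forall>m\<in>cMor C. cdom C m \<in> cOb C \<and> ccod C m \<in> cOb C) \<and>
     (\<forall>a\<in>cOb C. cid C a \<in> cMor C \<and> cdom C (cid C a) = a \<and> ccod C (cid C a) = a) \<and>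
     (\<forall>f\<in>cMor C. \<forall>g\<in>cMor C. ccod C f = cdom C g \<longrightarrow>
        ccomp C g f \<in> cMor C \<and> cdom C (ccomp C g f) = cdom C f \<and> ccod C (ccomp C g f) = ccod C g) \<and>
     (\<forall>f\<in>cMor C. ccomp C (cid C (ccod C f)) f = f \<and> ccomp C f (cid C (cdom C f)) = f) \<and>
     (\<forall>f\<in>cMor C. \<forall>g\<in>cMor C. \<forall>h\<in>cMor C. ccod C f = cdom C g \<and> ccod C g = cdom C h \<longrightarrow>
        ccomp C h (ccomp C g f) = ccomp C (ccomp C h g) f)"

definition is_functor_to_V :: "nat \<Rightarrow> fcat \<Rightarrow> (nat \<Rightarrow> vobj) \<Rightarrow> (nat \<Rightarrow> vmor) \<Rightarrow> bool" where
  "is_functor_to_V r C Go Gm \<longleftrightarrow>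
     (\<forall>a\<in>cOb C. is_vobj r (Go a)) \<and>
     (\<forall>m\<in>cMor C. Gm m \<in> vhom r (Go (cdom C m)) (Go (ccod C m))) \<and>
     (\<forall>a\<in>cOb C. Gm (cid C a) = vid (Go a)) \<and>
     (\<forall>f\<in>cMor C. \<forall>g\<in>cMor C. ccod C f = cdom C g \<longrightarrow>
        Gm (ccomp C g f) = vcomp (Gm g) (Gm f))"

text \<open>The colimit of the representables V_r(-, G e), computed pointwise as in Set:
  at c it is the disjoint union of the V_r(c, G e) modulo the equivalence relation
  generated by (e, f) ~ (e', G(alpha) o f) for alpha : e -> e'.\<close>
definition colim_step :: "nat \<Rightarrow> fcat \<Rightarrow> (nat \<Rightarrow> vobj) \<Rightarrow> (nat \<Rightarrow> vmor)
    \<Rightarrow> ((nat \<times> vmor) \<times> (nat \<times> vmor)) set" where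
  "colim_step r C Go Gm = {((cdom C \<alpha>, f), (ccod C \<alpha>, vcomp (Gm \<alpha>) f)) | \<alpha> f.
      \<alpha> \<in> cMor C \<and> is_vmor r f \<and> vcod f = Go (cdom C \<alpha>)}"

definition colim_rel :: "nat \<Rightarrow> fcat \<Rightarrow> (nat \<Rightarrow> vobj) \<Rightarrow> (nat \<Rightarrow> vmor)
    \<Rightarrow> ((nat \<times> vmor) \<times> (nat \<times> vmor)) set" where
  "colim_rel r C Go Gm = (colim_step r C Go Gm \<union> (colim_step r C Go Gm)\<inverse>)\<^sup>*"

definition colim_o :: "nat \<Rightarrow> fcat \<Rightarrow> (nat \<Rightarrow> vobj) \<Rightarrow> (nat \<Rightarrow> vmor)
    \<Rightarrow> vobj \<Rightarrow> (nat \<times> vmor) set set" where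
  "colim_o r C Go Gm c = (SIGMA e:cOb C. vhom r c (Go e)) // colim_rel r C Go Gm"

definition colim_m :: "nat \<Rightarrow> fcat \<Rightarrow> (nat \<Rightarrow> vobj) \<Rightarrow> (nat \<Rightarrow> vmor)
    \<Rightarrow> vmor \<Rightarrow> (nat \<times> vmor) set \<Rightarrow> (nat \<times> vmor) set" where
  "colim_m r C Go Gm h K = colim_rel r C Go Gm `` ((\<lambda>(e, f). (e, vcomp f h)) ` K)"

definition fin_gen :: "nat \<Rightarrow> (vobj \<Rightarrow> 'x set) \<Rightarrow> (vmor \<Rightarrow> 'x \<Rightarrow> 'x) \<Rightarrow> bool" where
  "fin_gen r Xo Xm \<longleftrightarrow>
     (\<exists>C Go Gm. is_fin_cat C \<and> is_functor_to_V r C Go Gm \<and>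
        presheaf_iso r Xo Xm (colim_o r C Go Gm) (colim_m r C Go Gm))"

definition zero_vec :: "nat \<Rightarrow> nat list" where
  "zero_vec r = replicate r 0"

definition no_double_edges :: "nat \<Rightarrow> (vobj \<Rightarrow> 'x set) \<Rightarrow> (vmor \<Rightarrow> 'x \<Rightarrow> 'x) \<Rightarrow> bool" where
  "no_double_edges r Xo Xm \<longleftrightarrow>
     (\<forall>u. length u = r \<longrightarrow>
        (\<forall>e1\<in>Xo (Some u, zero_vec r). \<forall>e2\<in>Xo (Some u, zero_vec r). e1 \<noteq> e2 \<longrightarrow>
           Xm (Sig u, (zero_vec r, zero_vec r)) e1 \<noteq> Xm (Sig u, (zero_vec r, zero_vec r)) e2 \<or>
           Xm (Tau u, (zero_vec r, zero_vec r)) e1 \<noteq> Xm (Tau u, (zero_vec r, zero_vec r)) e2))"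

definition is_vass :: "nat \<Rightarrow> 'q set \<Rightarrow> ('q \<times> int list \<times> 'q) set \<Rightarrow> bool" where
  "is_vass r Q E \<longleftrightarrow> finite Q \<and> finite E \<and> E \<subseteq> Q \<times> {u. length u = r} \<times> Q"

definition vass_iso :: "'p set \<Rightarrow> ('p \<times> int list \<times> 'p) set \<Rightarrow> 'q set \<Rightarrow> ('q \<times> int list \<times> 'q) set \<Rightarrow> bool" where
  "vass_iso Q E Q' E' \<longleftrightarrow>
     (\<exists>h. bij_betw h Q Q' \<and> E' = (\<lambda>(p, u, q). (h p, u, h q)) ` E)"

text \<open>The presheaf X_(Q,E); elements (Inl q, v) and (Inr e, v).\<close>
fun vass_o :: "'q set \<Rightarrow> ('q \<times> int list \<times> 'q) set \<Rightarrow> vobj \<Rightarrow> (('q + ('q \<times> int list \<times> 'q)) \<times> nat list) set" where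
  "vass_o Q E (None, v) = (\<lambda>q. (Inl q, v)) ` Q"
| "vass_o Q E (Some u, v) = (\<lambda>e. (Inr e, v)) ` {e \<in> E. fst (snd e) = u}"

definition vass_m :: "vmor \<Rightarrow> ('q + ('q \<times> int list \<times> 'q)) \<times> nat list \<Rightarrow> ('q + ('q \<times> int list \<times> 'q)) \<times> nat list" where
  "vass_m f x = (let w = fst (snd f) in
     (case fst f of
        GId _ \<Rightarrow> (fst x, w)
      | Sig _ \<Rightarrow> (case fst x of Inr (p, u, q) \<Rightarrow> (Inl p, w) | Inl q \<Rightarrow> undefined)
      | Tau _ \<Rightarrow> (case fst x of Inr (p, u, q) \<Rightarrow> (Inl q, w) | Inl q \<Rightarrow> undefined)))"

definition pQ :: "nat \<Rightarrow> (vobj \<Rightarrow> 'x set) \<Rightarrow> (vmor \<Rightarrow> 'x \<Rightarrow> 'x) \<Rightarrow> 'x set" where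
  "pQ r Xo Xm = Xo (None, zero_vec r)"

definition pE :: "nat \<Rightarrow> (vobj \<Rightarrow> 'x set) \<Rightarrow> (vmor \<Rightarrow> 'x \<Rightarrow> 'x) \<Rightarrow> ('x \<times> int list \<times> 'x) set" where
  "pE r Xo Xm = (\<Union>u\<in>{u. length u = r}.
     (\<lambda>e. (Xm (Sig u, (zero_vec r, zero_vec r)) e, u, Xm (Tau u, (zero_vec r, zero_vec r)) e))
       ` Xo (Some u, zero_vec r))"

end

(* Conversely, in a presheaf X every element over (o, v) is transported
   bijectively, along the identity of o, to counter value 0, where it is a state of Q_X or an edge
   element, and an edge element is determined by its end points because X has no double edges;
   this gives X \<cong> X_(Q_X, E_X).  Finiteness of (Q_X, E_X) comes from finite generation (a finite
   colimit of representables has finite fibres and finitely many edge labels), and X_(Q,E) is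
   itself the colimit of the finite diagram of its states and edges with the arrows sigma, tau
   from the end points of each edge. *)

theory Submission
  imports Defs
begin

lemmas vcat_defs = vdom_def vcod_def vcomp_def vid_def is_vmor_def is_vobj_def zero_vec_def

lemma gdom_gcomp: "gcod f = gdom g \<Longrightarrow> gdom (gcomp g f) = gdom f"
  by (cases g; cases f) auto

lemma gcod_gcomp: "gcod f = gdom g \<Longrightarrow> gcod (gcomp g f) = gcod g"
  by (cases g; cases f) auto

lemma gcomp_GId_right [simp]: "gdom g = o' \<Longrightarrow> gcomp g (GId o') = g"
  by (cases g) auto

lemma gcod_eq_None_iff: "gcod g = None \<longleftrightarrow> g = GId None"
  by (cases g) auto

lemma is_vmor_iff [simp]: "is_vmor r (g, a, b) \<longleftrightarrow> is_vobj r (gdom g, a) \<and> is_vobj r (gcod g, b)"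
  by (simp add: is_vmor_def vdom_def vcod_def)

lemma vdom_vcomp: "vcod f = vdom g \<Longrightarrow> vdom (vcomp g f) = vdom f"
  by (simp add: vdom_def vcod_def vcomp_def gdom_gcomp)

lemma vcod_vcomp: "vcod f = vdom g \<Longrightarrow> vcod (vcomp g f) = vcod g"
  by (simp add: vdom_def vcod_def vcomp_def gcod_gcomp)

lemma vcomp_in_vhom: "f \<in> vhom r a b \<Longrightarrow> g \<in> vhom r b c \<Longrightarrow> vcomp g f \<in> vhom r a c"
  by (auto simp: vhom_def is_vmor_def vdom_vcomp vcod_vcomp)

lemma vcomp_vid_left: "vcod f = d \<Longrightarrow> vcomp (vid d) f = f"
  by (cases f) (auto simp: vcat_defs)

lemma vcomp_vid_right: "vdom g = d \<Longrightarrow> vcomp g (vid d) = g"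
  by (cases g; cases "fst g") (auto simp: vcat_defs)

lemma vid_in_vhom: "is_vobj r c \<Longrightarrow> vid c \<in> vhom r c c"
  by (cases c) (auto simp: vhom_def vcat_defs)

lemma finite_vhom: "finite (vhom r c d)"
proof -
  let ?labels = "Some -` {fst d}"
  have "vhom r c d \<subseteq> (\<lambda>g. (g, snd c, snd d)) ` insert (GId (fst c)) (Sig ` ?labels \<union> Tau ` ?labels)"
  proof
    fix f assume "f \<in> vhom r c d"
    moreover obtain g a b where "f = (g, a, b)" by (cases f) auto
    ultimately show "f \<in> (\<lambda>g. (g, snd c, snd d)) ` insert (GId (fst c)) (Sig ` ?labels \<union> Tau ` ?labels)"
      by (cases g) (auto simp: vhom_def vdom_def vcod_def)
  qed
  then show ?thesis
    by (rule finite_subset)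
      (intro finite_imageI finite_insert[THEN iffD2] finite_UnI finite_vimageI; simp add: inj_def)
qed

lemma presheaf_maps_into:
  "is_presheaf r Xo Xm \<Longrightarrow> is_vmor r f \<Longrightarrow> x \<in> Xo (vcod f) \<Longrightarrow> Xm f x \<in> Xo (vdom f)"
  unfolding is_presheaf_def by blast

lemma presheaf_vid: "is_presheaf r Xo Xm \<Longrightarrow> is_vobj r c \<Longrightarrow> x \<in> Xo c \<Longrightarrow> Xm (vid c) x = x"
  unfolding is_presheaf_def by blast

lemma presheaf_vcomp:
  "is_presheaf r Xo Xm \<Longrightarrow> is_vmor r f \<Longrightarrow> is_vmor r g \<Longrightarrow> vcod f = vdom g \<Longrightarrow> x \<in> Xo (vcod g)
    \<Longrightarrow> Xm (vcomp g f) x = Xm f (Xm g x)"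
  unfolding is_presheaf_def by blast

lemma presheaf_gcomp:
  assumes "is_presheaf r Xo Xm" "is_vmor r (f, a, b)" "is_vmor r (g, b, c)" "gcod f = gdom g"
    and "x \<in> Xo (gcod g, c)"
  shows "Xm (f, a, b) (Xm (g, b, c) x) = Xm (gcomp g f, a, c) x"
  using presheaf_vcomp[OF assms(1-3)] assms(4,5) by (simp add: vdom_def vcod_def vcomp_def)

lemma presheaf_transport_bij:
  assumes P: "is_presheaf r Xo Xm" and "is_vobj r (o', v)" "is_vobj r (o', w)"
  shows "bij_betw (Xm (GId o', w, v)) (Xo (o', v)) (Xo (o', w))"
proof (rule bij_betw_byWitness[where f' = "Xm (GId o', v, w)"])
  have roundtrip: "Xm (GId o', b, a) (Xm (GId o', a, b) x) = x"
    if "is_vobj r (o', a)" "is_vobj r (o', b)" "x \<in> Xo (o', b)" for a b x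
    using presheaf_gcomp[OF P, of "GId o'" b a "GId o'" b] presheaf_vid[OF P, of "(o', b)"] that
    by (simp add: vid_def)
  show "\<forall>x\<in>Xo (o', v). Xm (GId o', v, w) (Xm (GId o', w, v) x) = x"
    using roundtrip assms by blast
  show "\<forall>x\<in>Xo (o', w). Xm (GId o', w, v) (Xm (GId o', v, w) x) = x"
    using roundtrip assms by blast
  show "Xm (GId o', w, v) ` Xo (o', v) \<subseteq> Xo (o', w)"
    using presheaf_maps_into[OF P, of "(GId o', w, v)"] assms by (auto simp: vdom_def vcod_def)
  show "Xm (GId o', v, w) ` Xo (o', w) \<subseteq> Xo (o', v)"
    using presheaf_maps_into[OF P, of "(GId o', v, w)"] assms by (auto simp: vdom_def vcod_def)
qed

section \<open>Colimits of representables\<close>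

abbreviation colim_elems :: "nat \<Rightarrow> fcat \<Rightarrow> (nat \<Rightarrow> vobj) \<Rightarrow> vobj \<Rightarrow> (nat \<times> vmor) set" where
  "colim_elems r C Go c \<equiv> SIGMA e:cOb C. vhom r c (Go e)"

lemma equiv_colim_rel: "equiv UNIV (colim_rel r C Go Gm)"
  unfolding colim_rel_def by (intro equivI refl_rtrancl sym_rtrancl sym_Un_converse trans_rtrancl) simp

lemma colim_rel_sym: "(s, t) \<in> colim_rel r C Go Gm \<Longrightarrow> (t, s) \<in> colim_rel r C Go Gm"
  using equiv_colim_rel unfolding equiv_def sym_def by blast

lemma colim_rel_trans:
  "(s, t) \<in> colim_rel r C Go Gm \<Longrightarrow> (t, u) \<in> colim_rel r C Go Gm \<Longrightarrow> (s, u) \<in> colim_rel r C Go Gm"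
  using equiv_colim_rel unfolding equiv_def trans_def by blast

lemma finite_colim_o: "is_fin_cat C \<Longrightarrow> finite (colim_o r C Go Gm c)"
  unfolding colim_o_def quotient_def is_fin_cat_def
  by (intro finite_UN_I finite_SigmaI finite_vhom) simp_all

lemma colim_o_nonempty_label:
  assumes "colim_o r C Go Gm (Some u, v) \<noteq> {}"
  shows "\<exists>a\<in>cOb C. fst (Go a) = Some u"
proof -
  obtain a f where "a \<in> cOb C" "f \<in> vhom r (Some u, v) (Go a)"
    using assms unfolding colim_o_def quotient_def by blast
  moreover obtain g w b where "f = (g, w, b)" by (cases f) auto
  ultimately have "fst (Go a) = Some u"
    by (cases g) (auto simp: vhom_def vdom_def vcod_def dest: sym[of _ "Go a"])
  with \<open>a \<in> cOb C\<close> show ?thesis ..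
qed

lemma functor_vhom:
  "is_functor_to_V r C Go Gm \<Longrightarrow> \<alpha> \<in> cMor C \<Longrightarrow> Gm \<alpha> \<in> vhom r (Go (cdom C \<alpha>)) (Go (ccod C \<alpha>))"
  unfolding is_functor_to_V_def by blast

lemma colim_rel_step:
  "\<alpha> \<in> cMor C \<Longrightarrow> is_vmor r f \<Longrightarrow> vcod f = Go (cdom C \<alpha>)
    \<Longrightarrow> ((cdom C \<alpha>, f), (ccod C \<alpha>, vcomp (Gm \<alpha>) f)) \<in> colim_rel r C Go Gm"
  unfolding colim_rel_def colim_step_def by blast

lemma colim_step_elems:
  assumes C: "is_fin_cat C" and G: "is_functor_to_V r C Go Gm" and st: "(s, t) \<in> colim_step r C Go Gm"
  shows "s \<in> colim_elems r C Go c \<longleftrightarrow> t \<in> colim_elems r C Go c"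
proof -
  obtain \<alpha> f where \<alpha>: "\<alpha> \<in> cMor C" and f: "is_vmor r f" "vcod f = Go (cdom C \<alpha>)"
    and s: "s = (cdom C \<alpha>, f)" and t: "t = (ccod C \<alpha>, vcomp (Gm \<alpha>) f)"
    using st unfolding colim_step_def by blast
  have "cdom C \<alpha> \<in> cOb C" "ccod C \<alpha> \<in> cOb C"
    using C \<alpha> unfolding is_fin_cat_def by auto
  moreover have "f \<in> vhom r (vdom f) (Go (cdom C \<alpha>))"
    using f by (simp add: vhom_def)
  ultimately show ?thesis
    using s t vcomp_in_vhom[OF _ functor_vhom[OF G \<alpha>]] by (auto simp: vhom_def vdom_vcomp)
qed

lemma colim_rel_elems:
  assumes "is_fin_cat C" "is_functor_to_V r C Go Gm"
  shows "(s, t) \<in> colim_rel r C Go Gm \<Longrightarrow> s \<in> colim_elems r C Go c \<Longrightarrow> t \<in> colim_elems r C Go c"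
  unfolding colim_rel_def
proof (induction rule: rtrancl_induct)
  case (step t t')
  then show ?case
    using colim_step_elems[OF assms, of t t' c] colim_step_elems[OF assms, of t' t c] by blast
qed

text \<open>By the Yoneda lemma, a cocone from the representables \<open>V_r(-, Go a)\<close> to \<open>X\<close> is a
  compatible family \<open>gen a \<in> X(Go a)\<close>; it sends \<open>(a, f)\<close> to \<open>X(f)(gen a)\<close>.\<close>

definition yoneda_cocone :: "nat \<Rightarrow> fcat \<Rightarrow> (nat \<Rightarrow> vobj) \<Rightarrow> (nat \<Rightarrow> vmor)
    \<Rightarrow> (vobj \<Rightarrow> 'x set) \<Rightarrow> (vmor \<Rightarrow> 'x \<Rightarrow> 'x) \<Rightarrow> (nat \<Rightarrow> 'x) \<Rightarrow> bool" where
  "yoneda_cocone r C Go Gm Xo Xm gen \<longleftrightarrow>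
     (\<forall>a\<in>cOb C. gen a \<in> Xo (Go a)) \<and> (\<forall>\<alpha>\<in>cMor C. Xm (Gm \<alpha>) (gen (ccod C \<alpha>)) = gen (cdom C \<alpha>))"

definition yoneda_eval :: "(vmor \<Rightarrow> 'x \<Rightarrow> 'x) \<Rightarrow> (nat \<Rightarrow> 'x) \<Rightarrow> nat \<times> vmor \<Rightarrow> 'x" where
  "yoneda_eval Xm gen s = Xm (snd s) (gen (fst s))"

locale yoneda_cocone_setting =
  fixes r :: nat and C :: fcat and Go :: "nat \<Rightarrow> vobj" and Gm :: "nat \<Rightarrow> vmor"
    and Xo :: "vobj \<Rightarrow> 'x set" and Xm :: "vmor \<Rightarrow> 'x \<Rightarrow> 'x" and gen :: "nat \<Rightarrow> 'x"
  assumes presheaf: "is_presheaf r Xo Xm" and fin_cat: "is_fin_cat C"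
    and diagram_functor: "is_functor_to_V r C Go Gm" and cocone: "yoneda_cocone r C Go Gm Xo Xm gen"
begin

lemma gen_in: "a \<in> cOb C \<Longrightarrow> gen a \<in> Xo (Go a)"
  using cocone unfolding yoneda_cocone_def by blast

lemma gen_compatible: "\<alpha> \<in> cMor C \<Longrightarrow> Xm (Gm \<alpha>) (gen (ccod C \<alpha>)) = gen (cdom C \<alpha>)"
  using cocone unfolding yoneda_cocone_def by blast

lemma yoneda_eval_in: "s \<in> colim_elems r C Go c \<Longrightarrow> yoneda_eval Xm gen s \<in> Xo c"
  using presheaf_maps_into[OF presheaf] gen_in by (auto simp: yoneda_eval_def vhom_def)

lemma yoneda_eval_step:
  assumes "(s, t) \<in> colim_step r C Go Gm"
  shows "yoneda_eval Xm gen s = yoneda_eval Xm gen t"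
proof -
  obtain \<alpha> f where \<alpha>: "\<alpha> \<in> cMor C" and f: "is_vmor r f" "vcod f = Go (cdom C \<alpha>)"
    and s: "s = (cdom C \<alpha>, f)" and t: "t = (ccod C \<alpha>, vcomp (Gm \<alpha>) f)"
    using assms unfolding colim_step_def by blast
  have G\<alpha>: "Gm \<alpha> \<in> vhom r (Go (cdom C \<alpha>)) (Go (ccod C \<alpha>))"
    using functor_vhom[OF diagram_functor \<alpha>] .
  have "ccod C \<alpha> \<in> cOb C"
    using fin_cat \<alpha> unfolding is_fin_cat_def by blast
  then have "Xm (vcomp (Gm \<alpha>) f) (gen (ccod C \<alpha>)) = Xm f (Xm (Gm \<alpha>) (gen (ccod C \<alpha>)))"
    using presheaf_vcomp[OF presheaf f(1)] G\<alpha> f(2) gen_in by (auto simp: vhom_def)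
  then show ?thesis
    using s t gen_compatible[OF \<alpha>] by (simp add: yoneda_eval_def)
qed

lemma yoneda_eval_colim_rel:
  "(s, t) \<in> colim_rel r C Go Gm \<Longrightarrow> yoneda_eval Xm gen s = yoneda_eval Xm gen t"
  unfolding colim_rel_def
  by (induction rule: rtrancl_induct) (auto dest: yoneda_eval_step)

lemma yoneda_eval_precomp:
  assumes h: "is_vmor r h" and s: "s \<in> colim_elems r C Go (vcod h)"
  shows "(\<lambda>(a, f). (a, vcomp f h)) s \<in> colim_elems r C Go (vdom h)"
    and "yoneda_eval Xm gen ((\<lambda>(a, f). (a, vcomp f h)) s) = Xm h (yoneda_eval Xm gen s)"
proof -
  obtain a f where s: "s = (a, f)" and a: "a \<in> cOb C" and f: "f \<in> vhom r (vcod h) (Go a)"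
    using s by blast
  have "h \<in> vhom r (vdom h) (vcod h)"
    using h by (simp add: vhom_def)
  then show "(\<lambda>(a, f). (a, vcomp f h)) s \<in> colim_elems r C Go (vdom h)"
    using s a vcomp_in_vhom[OF _ f] by simp
  show "yoneda_eval Xm gen ((\<lambda>(a, f). (a, vcomp f h)) s) = Xm h (yoneda_eval Xm gen s)"
    using presheaf_vcomp[OF presheaf h] f gen_in[OF a] s by (simp add: vhom_def yoneda_eval_def)
qed

end

locale yoneda_colimit = yoneda_cocone_setting +
  assumes eval_onto: "\<And>c x. is_vobj r c \<Longrightarrow> x \<in> Xo c
      \<Longrightarrow> \<exists>s\<in>colim_elems r C Go c. yoneda_eval Xm gen s = x"
    and eval_fibres_connected: "\<And>c s t. s \<in> colim_elems r C Go c \<Longrightarrow> t \<in> colim_elems r C Go c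
      \<Longrightarrow> yoneda_eval Xm gen s = yoneda_eval Xm gen t \<Longrightarrow> (s, t) \<in> colim_rel r C Go Gm"
begin

definition eval_preimage where
  "eval_preimage c x = (SOME s. s \<in> colim_elems r C Go c \<and> yoneda_eval Xm gen s = x)"

definition class_of where
  "class_of c x = colim_rel r C Go Gm `` {eval_preimage c x}"

lemma eval_preimage:
  assumes "is_vobj r c" "x \<in> Xo c"
  shows "eval_preimage c x \<in> colim_elems r C Go c" "yoneda_eval Xm gen (eval_preimage c x) = x"
  using someI_ex[OF eval_onto[OF assms, unfolded Bex_def]] by (simp_all add: eval_preimage_def)

lemma class_of_eval:
  assumes "is_vobj r c" "s \<in> colim_elems r C Go c"
  shows "class_of c (yoneda_eval Xm gen s) = colim_rel r C Go Gm `` {s}"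
proof -
  have "(eval_preimage c (yoneda_eval Xm gen s), s) \<in> colim_rel r C Go Gm"
    using assms eval_preimage[OF assms(1) yoneda_eval_in] eval_fibres_connected by blast
  then show ?thesis
    unfolding class_of_def using equiv_class_eq_iff[OF equiv_colim_rel] by blast
qed

lemma bij_class_of:
  assumes c: "is_vobj r c"
  shows "bij_betw (class_of c) (Xo c) (colim_o r C Go Gm c)"
proof (rule bij_betw_imageI)
  show "inj_on (class_of c) (Xo c)"
  proof (rule inj_onI)
    fix x y assume x: "x \<in> Xo c" and y: "y \<in> Xo c" and "class_of c x = class_of c y"
    then have "(eval_preimage c x, eval_preimage c y) \<in> colim_rel r C Go Gm"
      unfolding class_of_def using equiv_class_eq_iff[OF equiv_colim_rel] by blast
    then show "x = y"
      using yoneda_eval_colim_rel eval_preimage(2)[OF c x] eval_preimage(2)[OF c y] by metis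
  qed
  show "class_of c ` Xo c = colim_o r C Go Gm c"
  proof
    show "class_of c ` Xo c \<subseteq> colim_o r C Go Gm c"
      using eval_preimage(1)[OF c] by (auto simp: class_of_def colim_o_def intro: quotientI)
    show "colim_o r C Go Gm c \<subseteq> class_of c ` Xo c"
    proof
      fix K assume "K \<in> colim_o r C Go Gm c"
      then obtain s where "s \<in> colim_elems r C Go c" "K = colim_rel r C Go Gm `` {s}"
        unfolding colim_o_def by (auto elim: quotientE)
      then show "K \<in> class_of c ` Xo c"
        using class_of_eval[OF c] yoneda_eval_in by (metis image_eqI)
    qed
  qed
qed

lemma class_of_natural:
  assumes h: "is_vmor r h" and x: "x \<in> Xo (vcod h)"
  shows "class_of (vdom h) (Xm h x) = colim_m r C Go Gm h (class_of (vcod h) x)"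
proof -
  let ?R = "colim_rel r C Go Gm" and ?s = "eval_preimage (vcod h) x"
    and ?pre = "\<lambda>(a, f). (a, vcomp f h)"
  have objs: "is_vobj r (vcod h)" "is_vobj r (vdom h)"
    using h by (simp_all add: is_vmor_def)
  have "?R `` {?pre t} = class_of (vdom h) (Xm h x)" if "t \<in> ?R `` {?s}" for t
  proof -
    have "t \<in> colim_elems r C Go (vcod h)"
      using colim_rel_elems[OF fin_cat diagram_functor _ eval_preimage(1)[OF objs(1) x]] that by simp
    moreover have "yoneda_eval Xm gen t = x"
      using yoneda_eval_colim_rel eval_preimage(2)[OF objs(1) x] that by fastforce
    ultimately show ?thesis
      using class_of_eval[OF objs(2)] yoneda_eval_precomp[OF h] by metis
  qed
  moreover have "?s \<in> ?R `` {?s}"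
    using equiv_class_self[OF equiv_colim_rel] by blast
  ultimately show ?thesis
    unfolding colim_m_def class_of_def[of "vcod h"] by blast
qed

lemma presheaf_iso_colim: "presheaf_iso r Xo Xm (colim_o r C Go Gm) (colim_m r C Go Gm)"
  unfolding presheaf_iso_def using bij_class_of class_of_natural by blast

end

section \<open>From a presheaf to a VASS\<close>

lemma vass_m_simps [simp]:
  "vass_m (GId o', w, v) (y, v') = (y, w)"
  "vass_m (Sig u, w, v) (Inr (p, u', q), v') = (Inl p, w)"
  "vass_m (Tau u, w, v) (Inr (p, u', q), v') = (Inl q, w)"
  by (simp_all add: vass_m_def)

lemma fin_gen_finite:
  assumes "fin_gen r Xo Xm"
  shows "is_vobj r c \<Longrightarrow> finite (Xo c)"
    and "finite {u. length u = r \<and> Xo (Some u, zero_vec r) \<noteq> {}}"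
proof -
  obtain C Go Gm \<phi> where C: "is_fin_cat C"
    and \<phi>: "\<And>c. is_vobj r c \<Longrightarrow> bij_betw (\<phi> c) (Xo c) (colim_o r C Go Gm c)"
    using assms unfolding fin_gen_def presheaf_iso_def by blast
  show "is_vobj r c \<Longrightarrow> finite (Xo c)"
    using \<phi> finite_colim_o[OF C] bij_betw_finite by blast
  have "{u. length u = r \<and> Xo (Some u, zero_vec r) \<noteq> {}} \<subseteq> Some -` (fst ` Go ` cOb C)"
  proof
    fix u assume u: "u \<in> {u. length u = r \<and> Xo (Some u, zero_vec r) \<noteq> {}}"
    then have "colim_o r C Go Gm (Some u, zero_vec r) \<noteq> {}"
      using \<phi>[of "(Some u, zero_vec r)"] by (auto simp: is_vobj_def zero_vec_def bij_betw_def)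
    then show "u \<in> Some -` (fst ` Go ` cOb C)"
      using colim_o_nonempty_label by force
  qed
  moreover have "finite (Some -` (fst ` Go ` cOb C))"
    using C by (intro finite_vimageI) (auto simp: is_fin_cat_def)
  ultimately show "finite {u. length u = r \<and> Xo (Some u, zero_vec r) \<noteq> {}}"
    by (rule finite_subset)
qed

definition edge_triple :: "nat \<Rightarrow> (vmor \<Rightarrow> 'x \<Rightarrow> 'x) \<Rightarrow> int list \<Rightarrow> 'x
    \<Rightarrow> 'x \<times> int list \<times> 'x" where
  "edge_triple r Xm u e = (Xm (Sig u, zero_vec r, zero_vec r) e, u, Xm (Tau u, zero_vec r, zero_vec r) e)"

lemma pE_eq_edge_triples:
  "pE r Xo Xm = (\<Union>u\<in>{u. length u = r}. edge_triple r Xm u ` Xo (Some u, zero_vec r))"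
  unfolding pE_def edge_triple_def ..

lemma pE_label_fibre:
  assumes "length u = r"
  shows "{t \<in> pE r Xo Xm. fst (snd t) = u} = edge_triple r Xm u ` Xo (Some u, zero_vec r)"
proof -
  have "fst (snd (edge_triple r Xm u' e)) = u'" for u' e
    by (simp add: edge_triple_def)
  then show ?thesis
    using assms unfolding pE_eq_edge_triples by auto
qed

lemma inj_on_edge_triple:
  "no_double_edges r Xo Xm \<Longrightarrow> length u = r \<Longrightarrow> inj_on (edge_triple r Xm u) (Xo (Some u, zero_vec r))"
  unfolding no_double_edges_def inj_on_def edge_triple_def by blast

lemma is_vass_pQ_pE:
  assumes P: "is_presheaf r Xo Xm" and F: "fin_gen r Xo Xm"
  shows "is_vass r (pQ r Xo Xm) (pE r Xo Xm)"
proof -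
  let ?labels = "{u. length u = r \<and> Xo (Some u, zero_vec r) \<noteq> {}}"
  have "pE r Xo Xm = (\<Union>u\<in>?labels. edge_triple r Xm u ` Xo (Some u, zero_vec r))"
    unfolding pE_eq_edge_triples by auto
  then have "finite (pE r Xo Xm)"
    using fin_gen_finite[OF F] by (auto simp: is_vobj_def zero_vec_def)
  moreover have "finite (pQ r Xo Xm)"
    unfolding pQ_def by (rule fin_gen_finite(1)[OF F]) (simp add: is_vobj_def zero_vec_def)
  moreover have "edge_triple r Xm u e \<in> pQ r Xo Xm \<times> {u. length u = r} \<times> pQ r Xo Xm"
    if "length u = r" "e \<in> Xo (Some u, zero_vec r)" for u e
    using that presheaf_maps_into[OF P, of "(Sig u, zero_vec r, zero_vec r)"]
      presheaf_maps_into[OF P, of "(Tau u, zero_vec r, zero_vec r)"]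
    by (auto simp: edge_triple_def pQ_def vcat_defs)
  then have "pE r Xo Xm \<subseteq> pQ r Xo Xm \<times> {u. length u = r} \<times> pQ r Xo Xm"
    unfolding pE_eq_edge_triples by blast
  ultimately show ?thesis
    by (simp add: is_vass_def)
qed

text \<open>The isomorphism \<open>X \<cong> X_(Q_X, E_X)\<close>: transport to counter value \<open>0\<close>, then read off the
  state or the edge triple.\<close>

definition vass_comparison :: "nat \<Rightarrow> (vmor \<Rightarrow> 'x \<Rightarrow> 'x) \<Rightarrow> vobj \<Rightarrow> 'x
    \<Rightarrow> ('x + 'x \<times> int list \<times> 'x) \<times> nat list" where
  "vass_comparison r Xm c x = (case fst c of
     None \<Rightarrow> (Inl (Xm (GId None, zero_vec r, snd c) x), snd c)
   | Some u \<Rightarrow> (Inr (edge_triple r Xm u (Xm (GId (Some u), zero_vec r, snd c) x)), snd c))"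

lemma bij_vass_comparison:
  assumes P: "is_presheaf r Xo Xm" and N: "no_double_edges r Xo Xm" and c: "is_vobj r c"
  shows "bij_betw (vass_comparison r Xm c) (Xo c) (vass_o (pQ r Xo Xm) (pE r Xo Xm) c)"
proof -
  obtain o' v where cv: "c = (o', v)" by (cases c)
  have transport: "bij_betw (Xm (GId o', zero_vec r, v)) (Xo (o', v)) (Xo (o', zero_vec r))"
    by (rule presheaf_transport_bij[OF P]) (use c cv in \<open>auto simp: vcat_defs\<close>)
  show ?thesis
  proof (cases o')
    case None
    have "bij_betw (\<lambda>q. (Inl q, v)) (Xo (None, zero_vec r)) ((\<lambda>q. (Inl q, v)) ` Xo (None, zero_vec r))"
      by (rule bij_betw_imageI) (auto simp: inj_on_def)
    from bij_betw_trans[OF transport[unfolded None] this] show ?thesis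
      using None cv by (simp add: vass_comparison_def[abs_def] pQ_def comp_def)
  next
    case (Some u)
    have u: "length u = r"
      using c cv Some by (simp add: is_vobj_def)
    have "bij_betw (edge_triple r Xm u) (Xo (Some u, zero_vec r)) {t \<in> pE r Xo Xm. fst (snd t) = u}"
      using inj_on_edge_triple[OF N u] pE_label_fibre[OF u, where Xo = Xo and Xm = Xm]
      by (simp add: bij_betw_def)
    moreover have "bij_betw (\<lambda>t. (Inr t, v)) {t \<in> pE r Xo Xm. fst (snd t) = u}
        ((\<lambda>t. (Inr t, v)) ` {t \<in> pE r Xo Xm. fst (snd t) = u})"
      by (rule bij_betw_imageI) (auto simp: inj_on_def)
    ultimately have "bij_betw ((\<lambda>t. (Inr t, v)) \<circ> edge_triple r Xm u \<circ> Xm (GId (Some u), zero_vec r, v))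
        (Xo (Some u, v)) ((\<lambda>t. (Inr t, v)) ` {t \<in> pE r Xo Xm. fst (snd t) = u})"
      using transport[unfolded Some] by (blast intro: bij_betw_trans)
    then show ?thesis
      using Some cv by (simp add: vass_comparison_def[abs_def] comp_def)
  qed
qed

lemma vass_comparison_natural:
  assumes P: "is_presheaf r Xo Xm" and f: "is_vmor r f" and x: "x \<in> Xo (vcod f)"
  shows "vass_comparison r Xm (vdom f) (Xm f x) = vass_m f (vass_comparison r Xm (vcod f) x)"
proof -
  obtain g w v where fd: "f = (g, w, v)" by (cases f) auto
  have at_zero: "is_vobj r (gdom g, zero_vec r)" "is_vobj r (gcod g, zero_vec r)"
    using f fd by (simp_all add: is_vobj_def zero_vec_def)
  have dom_side: "Xm (GId (gdom g), zero_vec r, w) (Xm (g, w, v) x) = Xm (g, zero_vec r, v) x"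
    using presheaf_gcomp[OF P, of "GId (gdom g)" "zero_vec r" w g v] f fd x at_zero
    by (simp add: vcod_def)
  have cod_side: "Xm (g, zero_vec r, zero_vec r) (Xm (GId (gcod g), zero_vec r, v) x) = Xm (g, zero_vec r, v) x"
    using presheaf_gcomp[OF P, of g "zero_vec r" "zero_vec r" "GId (gcod g)" v] f fd x at_zero
    by (simp add: vcod_def)
  show ?thesis
  proof (cases g)
    case (GId o')
    then show ?thesis
      using fd dom_side by (cases o') (simp_all add: vass_comparison_def vdom_def vcod_def)
  qed (use fd dom_side cod_side in \<open>simp_all add: vass_comparison_def edge_triple_def vdom_def vcod_def\<close>)
qed

lemma presheaf_iso_vass_pQ_pE:
  assumes "is_presheaf r Xo Xm" "no_double_edges r Xo Xm"
  shows "presheaf_iso r Xo Xm (vass_o (pQ r Xo Xm) (pE r Xo Xm)) vass_m"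
  unfolding presheaf_iso_def
  using bij_vass_comparison[OF assms] vass_comparison_natural[OF assms(1)]
  by (intro exI[where x = "vass_comparison r Xm"]) blast

section \<open>From a VASS to a presheaf\<close>

lemma vass_edge_ends: "is_vass r Q E \<Longrightarrow> (p, u, q) \<in> E \<Longrightarrow> p \<in> Q \<and> q \<in> Q \<and> length u = r"
  by (auto simp: is_vass_def)

lemma vass_o_maps_into:
  assumes V: "is_vass r Q E" and x: "x \<in> vass_o Q E (vcod f)"
  shows "vass_m f x \<in> vass_o Q E (vdom f)"
proof -
  obtain g w v where f: "f = (g, w, v)" by (cases f) auto
  show ?thesis
  proof (cases g)
    case (GId o')
    then show ?thesis using f x by (cases o') (auto simp: vdom_def vcod_def)
  qed (use f x vass_edge_ends[OF V] in \<open>auto simp: vdom_def vcod_def\<close>)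
qed

lemma vass_o_vcomp:
  assumes f: "is_vmor r f" and g: "is_vmor r g" and fg: "vcod f = vdom g"
    and x: "x \<in> vass_o Q E (vcod g)"
  shows "vass_m (vcomp g f) x = vass_m f (vass_m g x)"
proof -
  obtain gf a b where f: "f = (gf, a, b)" by (cases f) auto
  obtain gg b' c where g: "g = (gg, b', c)" by (cases g) auto
  have match: "gcod gf = gdom gg" "b' = b"
    using fg f g by (auto simp: vdom_def vcod_def)
  show ?thesis
  proof (cases gg)
    case (GId o')
    then show ?thesis
      using f g match x by (cases o'; cases gf) (auto simp: vcomp_def vcod_def)
  qed (use f g match x in \<open>auto simp: vcomp_def vcod_def gcod_eq_None_iff\<close>)
qed

lemma vass_presheaf:
  assumes V: "is_vass r Q E"
  shows "is_presheaf r (vass_o Q E) vass_m"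
  unfolding is_presheaf_def
proof (intro conjI allI impI ballI)
  fix f
  show "vass_m f ` vass_o Q E (vcod f) \<subseteq> vass_o Q E (vdom f)"
    using vass_o_maps_into[OF V] by blast
next
  fix c x assume "x \<in> vass_o Q E c"
  then show "vass_m (vid c) x = x"
    by (cases c; cases "fst c") (auto simp: vid_def)
next
  fix f g x assume "is_vmor r f \<and> is_vmor r g \<and> vcod f = vdom g" "x \<in> vass_o Q E (vcod g)"
  then show "vass_m (vcomp g f) x = vass_m f (vass_m g x)"
    using vass_o_vcomp by blast
qed

lemma vass_no_double_edges: "no_double_edges r (vass_o Q E) vass_m"
  unfolding no_double_edges_def
proof (intro allI impI ballI)
  fix u e1 e2
  assume "e1 \<in> vass_o Q E (Some u, zero_vec r)" "e2 \<in> vass_o Q E (Some u, zero_vec r)" "e1 \<noteq> e2"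
  then show "vass_m (Sig u, zero_vec r, zero_vec r) e1 \<noteq> vass_m (Sig u, zero_vec r, zero_vec r) e2 \<or>
      vass_m (Tau u, zero_vec r, zero_vec r) e1 \<noteq> vass_m (Tau u, zero_vec r, zero_vec r) e2"
    by auto
qed

lemma edge_triple_vass_m [simp]:
  "edge_triple r vass_m u (Inr (p, u', q), v) = ((Inl p, zero_vec r), u, (Inl q, zero_vec r))"
  by (simp add: edge_triple_def)

lemma pE_vass_o:
  assumes V: "is_vass r Q E"
  shows "pE r (vass_o Q E) vass_m = (\<lambda>(p, u, q). ((Inl p, zero_vec r), u, (Inl q, zero_vec r))) ` E"
    (is "_ = ?embed ` E")
proof (intro equalityI subsetI)
  fix t assume "t \<in> pE r (vass_o Q E) vass_m"
  then obtain p u q where "(p, u, q) \<in> E" "t = edge_triple r vass_m u (Inr (p, u, q), zero_vec r)"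
    unfolding pE_eq_edge_triples by auto
  then show "t \<in> ?embed ` E"
    by force
next
  fix t assume "t \<in> ?embed ` E"
  then obtain p u q where e: "(p, u, q) \<in> E" "t = edge_triple r vass_m u (Inr (p, u, q), zero_vec r)"
    by auto
  moreover have "(Inr (p, u, q), zero_vec r) \<in> vass_o Q E (Some u, zero_vec r)"
    using e by force
  ultimately show "t \<in> pE r (vass_o Q E) vass_m"
    unfolding pE_eq_edge_triples using vass_edge_ends[OF V] by blast
qed

lemma vass_iso_pQ_pE_vass_o:
  assumes V: "is_vass r Q E"
  shows "vass_iso (pQ r (vass_o Q E) vass_m) (pE r (vass_o Q E) vass_m) Q E"
  unfolding vass_iso_def pE_vass_o[OF V]
proof (intro exI conjI)
  let ?state = "\<lambda>x :: ('q + 'q \<times> int list \<times> 'q) \<times> nat list. case fst x of Inl q \<Rightarrow> q"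
  show "bij_betw ?state (pQ r (vass_o Q E) vass_m) Q"
    unfolding pQ_def by (rule bij_betw_byWitness[where f' = "\<lambda>q. (Inl q, zero_vec r)"]) auto
  show "E = (\<lambda>(p, u, q). (?state p, u, ?state q)) ` (\<lambda>(p, u, q). ((Inl p, zero_vec r), u, (Inl q, zero_vec r))) ` E"
    by (simp add: image_image split_def)
qed

section \<open>Finite generation of \<open>X_(Q,E)\<close>\<close>

text \<open>\<open>X_(Q,E)\<close> is the colimit of the finite diagram with an object \<open>2 nQ q\<close> over \<open>(\<emptyset>, 0)\<close>
  for each state \<open>q\<close>, an object \<open>2 nE e + 1\<close> over \<open>(vec e, 0)\<close> for each edge \<open>e\<close>, and arrows
  \<open>\<sigma>\<close>, \<open>\<tau>\<close> from the source and target states of \<open>e\<close> into \<open>e\<close>.  The arrows into an object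
  \<open>a\<close> are coded \<open>3a\<close> (identity), \<open>3a + 1\<close> (\<open>\<sigma>\<close>) and \<open>3a + 2\<close> (\<open>\<tau>\<close>).\<close>

locale vass_diagram =
  fixes r :: nat and Q :: "'q set" and E :: "('q \<times> int list \<times> 'q) set"
    and nQ :: "'q \<Rightarrow> nat" and nE :: "'q \<times> int list \<times> 'q \<Rightarrow> nat"
  assumes vass: "is_vass r Q E" and inj_nQ: "inj_on nQ Q" and inj_nE: "inj_on nE E"
begin

definition state_ob :: "'q \<Rightarrow> nat" where "state_ob q = 2 * nQ q"
definition edge_ob :: "'q \<times> int list \<times> 'q \<Rightarrow> nat" where "edge_ob e = Suc (2 * nE e)"
definition state_at :: "nat \<Rightarrow> 'q" where "state_at a = the_inv_into Q nQ (a div 2)"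
definition edge_at :: "nat \<Rightarrow> 'q \<times> int list \<times> 'q" where "edge_at a = the_inv_into E nE (a div 2)"
definition id_arr :: "nat \<Rightarrow> nat" where "id_arr a = 3 * a"
definition src_arr :: "nat \<Rightarrow> nat" where "src_arr a = 3 * a + 1"
definition tgt_arr :: "nat \<Rightarrow> nat" where "tgt_arr a = 3 * a + 2"

definition diagram :: fcat where
  "diagram = \<lparr>cOb = state_ob ` Q \<union> edge_ob ` E,
     cMor = id_arr ` (state_ob ` Q \<union> edge_ob ` E) \<union> src_arr ` edge_ob ` E \<union> tgt_arr ` edge_ob ` E,
     cdom = (\<lambda>m. if m mod 3 = 0 then m div 3
                 else if m mod 3 = 1 then state_ob (fst (edge_at (m div 3)))
                 else state_ob (snd (snd (edge_at (m div 3))))),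
     ccod = (\<lambda>m. m div 3),
     cid = id_arr,
     ccomp = (\<lambda>g f. if g mod 3 = 0 then f else g)\<rparr>"

definition diagram_ob :: "nat \<Rightarrow> vobj" where
  "diagram_ob a = (if even a then (None, zero_vec r) else (Some (fst (snd (edge_at a))), zero_vec r))"

definition diagram_mor :: "nat \<Rightarrow> vmor" where
  "diagram_mor m = (if m mod 3 = 0 then vid (diagram_ob (m div 3))
     else if m mod 3 = 1 then (Sig (fst (snd (edge_at (m div 3)))), zero_vec r, zero_vec r)
     else (Tau (fst (snd (edge_at (m div 3)))), zero_vec r, zero_vec r))"

lemma edge_at_edge_ob [simp]: "e \<in> E \<Longrightarrow> edge_at (edge_ob e) = e"
  unfolding edge_at_def edge_ob_def using the_inv_into_f_f[OF inj_nE] by simp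

lemma state_at_state_ob [simp]: "q \<in> Q \<Longrightarrow> state_at (state_ob q) = q"
  unfolding state_at_def state_ob_def using the_inv_into_f_f[OF inj_nQ] by simp

lemma even_state_ob [simp]: "even (state_ob q)"
  and odd_edge_ob [simp]: "odd (edge_ob e)"
  by (simp_all add: state_ob_def edge_ob_def)

lemma arr_code_simps [simp]:
  "id_arr a mod 3 = 0" "id_arr a div 3 = a"
  "src_arr a mod 3 = 1" "src_arr a div 3 = a"
  "tgt_arr a mod 3 = 2" "tgt_arr a div 3 = a"
  "3 dvd id_arr a" "\<not> 3 dvd src_arr a" "\<not> 3 dvd tgt_arr a"
  by (simp_all add: id_arr_def src_arr_def tgt_arr_def) presburger+

lemma edge_ends: "e \<in> E \<Longrightarrow> fst e \<in> Q \<and> snd (snd e) \<in> Q \<and> length (fst (snd e)) = r"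
  using vass_edge_ends[OF vass, of "fst e" "fst (snd e)" "snd (snd e)"] by simp

lemma diagram_ob_simps [simp]:
  "diagram_ob (state_ob q) = (None, zero_vec r)"
  "e \<in> E \<Longrightarrow> diagram_ob (edge_ob e) = (Some (fst (snd e)), zero_vec r)"
  by (simp_all add: diagram_ob_def)

lemma diagram_simps [simp]:
  "cOb diagram = state_ob ` Q \<union> edge_ob ` E"
  "ccod diagram m = m div 3"
  "cid diagram a = id_arr a"
  "ccomp diagram g f = (if g mod 3 = 0 then f else g)"
  "cdom diagram (id_arr a) = a"
  "e \<in> E \<Longrightarrow> cdom diagram (src_arr (edge_ob e)) = state_ob (fst e)"
  "e \<in> E \<Longrightarrow> cdom diagram (tgt_arr (edge_ob e)) = state_ob (snd (snd e))"
  by (simp_all add: diagram_def)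

lemma diagram_ob_cases:
  assumes "a \<in> cOb diagram"
  obtains (state) q where "q \<in> Q" "a = state_ob q" | (edge) e where "e \<in> E" "a = edge_ob e"
  using assms by auto

lemma diagram_arr_cases:
  assumes "m \<in> cMor diagram"
  obtains (id) a where "a \<in> cOb diagram" "m = id_arr a"
  | (src) e where "e \<in> E" "m = src_arr (edge_ob e)"
  | (tgt) e where "e \<in> E" "m = tgt_arr (edge_ob e)"
  using assms unfolding diagram_def by auto

lemma diagram_id_arr:
  "m \<in> cMor diagram \<Longrightarrow> m mod 3 = 0 \<Longrightarrow> m = id_arr (ccod diagram m) \<and> cdom diagram m = ccod diagram m"
  by (cases rule: diagram_arr_cases) auto

text \<open>The non-identity arrows go from a state to an edge, so they only compose with identities.\<close>

lemma diagram_nonid_arr: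
  "m \<in> cMor diagram \<Longrightarrow> m mod 3 \<noteq> 0 \<Longrightarrow> even (cdom diagram m) \<and> odd (ccod diagram m)"
  by (cases rule: diagram_arr_cases) auto

lemma diagram_comp_nonid:
  assumes "f \<in> cMor diagram" "g \<in> cMor diagram" "ccod diagram f = cdom diagram g" "g mod 3 \<noteq> 0"
  shows "f = id_arr (cdom diagram g) \<and> cdom diagram f = cdom diagram g"
  using assms diagram_id_arr[of f] diagram_nonid_arr[of f] diagram_nonid_arr[of g] by auto

lemma is_fin_cat_diagram: "is_fin_cat diagram"
  unfolding is_fin_cat_def
proof (intro conjI ballI impI)
  show "finite (cOb diagram)" "finite (cMor diagram)"
    using vass by (simp_all add: is_vass_def diagram_def)
next
  fix m assume "m \<in> cMor diagram"
  then show "cdom diagram m \<in> cOb diagram" "ccod diagram m \<in> cOb diagram"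
    by (cases rule: diagram_arr_cases; simp add: edge_ends)+
next
  fix a assume "a \<in> cOb diagram"
  then show "cid diagram a \<in> cMor diagram" "cdom diagram (cid diagram a) = a" "ccod diagram (cid diagram a) = a"
    by (auto simp: diagram_def)
next
  fix f g assume f: "f \<in> cMor diagram" and g: "g \<in> cMor diagram" and fg: "ccod diagram f = cdom diagram g"
  have "ccomp diagram g f \<in> cMor diagram \<and> cdom diagram (ccomp diagram g f) = cdom diagram f
      \<and> ccod diagram (ccomp diagram g f) = ccod diagram g"
    using diagram_id_arr[OF g] diagram_comp_nonid[OF f g fg] f g fg by (cases "g mod 3 = 0") auto
  then show "ccomp diagram g f \<in> cMor diagram" "cdom diagram (ccomp diagram g f) = cdom diagram f"
    "ccod diagram (ccomp diagram g f) = ccod diagram g"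
    by auto
next
  fix f assume f: "f \<in> cMor diagram"
  show "ccomp diagram (cid diagram (ccod diagram f)) f = f"
    by simp
  show "ccomp diagram f (cid diagram (cdom diagram f)) = f"
    using diagram_id_arr[OF f] by auto
next
  fix f g h
  show "ccomp diagram h (ccomp diagram g f) = ccomp diagram (ccomp diagram h g) f"
    by simp
qed

lemma is_vobj_diagram_ob: "a \<in> cOb diagram \<Longrightarrow> is_vobj r (diagram_ob a)"
  by (erule diagram_ob_cases) (simp_all add: is_vobj_def zero_vec_def edge_ends)

lemma diagram_mor_in_vhom:
  assumes "m \<in> cMor diagram"
  shows "diagram_mor m \<in> vhom r (diagram_ob (cdom diagram m)) (diagram_ob (ccod diagram m))"
  using assms
proof (cases rule: diagram_arr_cases)
  case (id a)
  then show ?thesis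
    using vid_in_vhom is_vobj_diagram_ob by (simp add: diagram_mor_def)
qed (simp_all add: diagram_mor_def vhom_def vcat_defs edge_ends)

lemma is_functor_diagram: "is_functor_to_V r diagram diagram_ob diagram_mor"
  unfolding is_functor_to_V_def
proof (intro conjI ballI impI is_vobj_diagram_ob diagram_mor_in_vhom)
  fix a assume "a \<in> cOb diagram"
  then show "diagram_mor (cid diagram a) = vid (diagram_ob a)"
    by (simp add: diagram_mor_def)
next
  fix f g assume f: "f \<in> cMor diagram" and g: "g \<in> cMor diagram" and fg: "ccod diagram f = cdom diagram g"
  have "vcod (diagram_mor f) = diagram_ob (ccod diagram f)" "vdom (diagram_mor g) = diagram_ob (cdom diagram g)"
    using diagram_mor_in_vhom[OF f] diagram_mor_in_vhom[OF g] by (simp_all add: vhom_def)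
  then show "diagram_mor (ccomp diagram g f) = vcomp (diagram_mor g) (diagram_mor f)"
    using diagram_id_arr[OF g] diagram_comp_nonid[OF f g fg] fg
    by (cases "g mod 3 = 0") (auto simp: diagram_mor_def vcomp_vid_left vcomp_vid_right)
qed

definition generator :: "nat \<Rightarrow> ('q + 'q \<times> int list \<times> 'q) \<times> nat list" where
  "generator a = (if even a then (Inl (state_at a), zero_vec r) else (Inr (edge_at a), zero_vec r))"

lemma generator_simps [simp]:
  "q \<in> Q \<Longrightarrow> generator (state_ob q) = (Inl q, zero_vec r)"
  "e \<in> E \<Longrightarrow> generator (edge_ob e) = (Inr e, zero_vec r)"
  by (simp_all add: generator_def)

lemma generator_in: "a \<in> cOb diagram \<Longrightarrow> generator a \<in> vass_o Q E (diagram_ob a)"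
  by (erule diagram_ob_cases) auto

lemma yoneda_cocone_generator: "yoneda_cocone r diagram diagram_ob diagram_mor (vass_o Q E) vass_m generator"
  unfolding yoneda_cocone_def
proof (intro conjI ballI generator_in)
  fix \<alpha> assume "\<alpha> \<in> cMor diagram"
  then show "vass_m (diagram_mor \<alpha>) (generator (ccod diagram \<alpha>)) = generator (cdom diagram \<alpha>)"
  proof (cases rule: diagram_arr_cases)
    case (id a)
    then show ?thesis
      using presheaf_vid[OF vass_presheaf[OF vass] is_vobj_diagram_ob generator_in] by (simp add: diagram_mor_def)
  qed (simp_all add: diagram_mor_def vass_m_def edge_ends split: prod.split)
qed

definition canonical_elem :: "('q + 'q \<times> int list \<times> 'q) \<times> nat list \<Rightarrow> nat \<times> vmor" where
  "canonical_elem x = (case fst x of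
      Inl q \<Rightarrow> (state_ob q, GId None, snd x, zero_vec r)
    | Inr e \<Rightarrow> (edge_ob e, GId (Some (fst (snd e))), snd x, zero_vec r))"

lemma canonical_elem:
  assumes "is_vobj r c" "x \<in> vass_o Q E c"
  shows "canonical_elem x \<in> colim_elems r diagram diagram_ob c"
    and "yoneda_eval vass_m generator (canonical_elem x) = x"
proof -
  obtain o' v where c: "c = (o', v)" by (cases c)
  show "canonical_elem x \<in> colim_elems r diagram diagram_ob c"
    using assms c edge_ends by (cases o') (auto simp: canonical_elem_def diagram_ob_def vhom_def vcat_defs)
  show "yoneda_eval vass_m generator (canonical_elem x) = x"
    using assms c by (cases o') (auto simp: canonical_elem_def yoneda_eval_def)
qed

lemma colim_rel_edge_ends:
  assumes "e \<in> E" "length w = r"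
  shows "((state_ob (fst e), GId None, w, zero_vec r), (edge_ob e, Sig (fst (snd e)), w, zero_vec r))
      \<in> colim_rel r diagram diagram_ob diagram_mor"
    and "((state_ob (snd (snd e)), GId None, w, zero_vec r), (edge_ob e, Tau (fst (snd e)), w, zero_vec r))
      \<in> colim_rel r diagram diagram_ob diagram_mor"
  using colim_rel_step[where C = diagram and Go = diagram_ob and Gm = diagram_mor and r = r
      and f = "(GId None, w, zero_vec r)" and \<alpha> = "src_arr (edge_ob e)"]
    colim_rel_step[where C = diagram and Go = diagram_ob and Gm = diagram_mor and r = r
      and f = "(GId None, w, zero_vec r)" and \<alpha> = "tgt_arr (edge_ob e)"]
    assms edge_ends[OF assms(1)]
  by (simp_all add: diagram_def diagram_mor_def vcat_defs)

lemma canonical_elem_connected: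
  assumes s: "s \<in> colim_elems r diagram diagram_ob c"
  shows "(canonical_elem (yoneda_eval vass_m generator s), s) \<in> colim_rel r diagram diagram_ob diagram_mor"
proof -
  obtain a g w b where sd: "s = (a, g, w, b)" and a: "a \<in> cOb diagram"
    and g: "(g, w, b) \<in> vhom r c (diagram_ob a)"
    using s by auto
  have self: "(s, s) \<in> colim_rel r diagram diagram_ob diagram_mor"
    using equiv_class_self[OF equiv_colim_rel] by blast
  have lw: "length w = r"
    using g by (auto simp: vhom_def is_vobj_def)
  from a show ?thesis
  proof (cases rule: diagram_ob_cases)
    case (state q)
    then show ?thesis
      using g sd self by (auto simp: vhom_def vcod_def gcod_eq_None_iff canonical_elem_def yoneda_eval_def)
  next
    case (edge e)
    obtain p u q where e: "e = (p, u, q)" by (cases e)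
    have gc: "gcod g = Some u" "b = zero_vec r"
      using g edge e by (auto simp: vhom_def vcod_def)
    show ?thesis
    proof (cases g)
      case (GId o')
      then show ?thesis
        using sd edge e gc self by (auto simp: canonical_elem_def yoneda_eval_def)
    qed (use colim_rel_edge_ends[OF edge(1) lw] sd edge e gc in
      \<open>auto simp: canonical_elem_def yoneda_eval_def intro: colim_rel_sym\<close>)
  qed
qed

lemma fin_gen_vass_o: "fin_gen r (vass_o Q E) vass_m"
proof -
  interpret yoneda_colimit r diagram diagram_ob diagram_mor "vass_o Q E" vass_m generator
  proof
    show "is_presheaf r (vass_o Q E) vass_m"
      using vass by (rule vass_presheaf)
    show "is_fin_cat diagram" "is_functor_to_V r diagram diagram_ob diagram_mor"
      "yoneda_cocone r diagram diagram_ob diagram_mor (vass_o Q E) vass_m generator"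
      by (fact is_fin_cat_diagram is_functor_diagram yoneda_cocone_generator)+
    show "\<exists>s\<in>colim_elems r diagram diagram_ob c. yoneda_eval vass_m generator s = x"
      if "is_vobj r c" "x \<in> vass_o Q E c" for c x
      using canonical_elem[OF that] by (rule bexI[rotated])
    show "(s, t) \<in> colim_rel r diagram diagram_ob diagram_mor"
      if "s \<in> colim_elems r diagram diagram_ob c" "t \<in> colim_elems r diagram diagram_ob c"
        "yoneda_eval vass_m generator s = yoneda_eval vass_m generator t" for c s t
      using colim_rel_trans[OF colim_rel_sym[OF canonical_elem_connected[OF that(1)]]]
        canonical_elem_connected[OF that(2)] that(3) by simp
  qed
  show ?thesis
    unfolding fin_gen_def
    by (intro exI[of _ diagram] exI[of _ diagram_ob] exI[of _ diagram_mor] conjI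
        is_fin_cat_diagram is_functor_diagram presheaf_iso_colim)
qed

end

lemma vass_fin_gen:
  fixes Q :: "'q set"
  assumes V: "is_vass r Q E"
  shows "fin_gen r (vass_o Q E) vass_m"
proof -
  have "finite Q" "finite E"
    using V by (simp_all add: is_vass_def)
  then obtain nQ :: "'q \<Rightarrow> nat" and nE :: "'q \<times> int list \<times> 'q \<Rightarrow> nat"
    where "inj_on nQ Q" "inj_on nE E"
    by (metis finite_imp_inj_to_nat_seg)
  then interpret vass_diagram r Q E nQ nE
    using V by unfold_locales
  show ?thesis
    by (rule fin_gen_vass_o)
qed

theorem proposition15:
  fixes r :: nat
  assumes "r \<ge> 1"
  shows "(\<forall>(Q :: 'q set) E. is_vass r Q E \<longrightarrow>
            is_presheaf r (vass_o Q E) vass_m \<and> fin_gen r (vass_o Q E) vass_m \<and>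
            no_double_edges r (vass_o Q E) vass_m \<and>
            vass_iso (pQ r (vass_o Q E) vass_m) (pE r (vass_o Q E) vass_m) Q E) \<and>
         (\<forall>(Xo :: vobj \<Rightarrow> 'x set) Xm. is_presheaf r Xo Xm \<and> fin_gen r Xo Xm \<and> no_double_edges r Xo Xm \<longrightarrow>
            is_vass r (pQ r Xo Xm) (pE r Xo Xm) \<and>
            presheaf_iso r Xo Xm (vass_o (pQ r Xo Xm) (pE r Xo Xm)) vass_m)"
proof (intro conjI allI impI)
  fix Q :: "'q set" and E assume "is_vass r Q E"
  then show "is_presheaf r (vass_o Q E) vass_m" "fin_gen r (vass_o Q E) vass_m"
    "no_double_edges r (vass_o Q E) vass_m"
    "vass_iso (pQ r (vass_o Q E) vass_m) (pE r (vass_o Q E) vass_m) Q E"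
    by (simp_all add: vass_presheaf vass_fin_gen vass_no_double_edges vass_iso_pQ_pE_vass_o)
next
  fix Xo :: "vobj \<Rightarrow> 'x set" and Xm
  assume "is_presheaf r Xo Xm \<and> fin_gen r Xo Xm \<and> no_double_edges r Xo Xm"
  then show "is_vass r (pQ r Xo Xm) (pE r Xo Xm)"
    "presheaf_iso r Xo Xm (vass_o (pQ r Xo Xm) (pE r Xo Xm)) vass_m"
    using is_vass_pQ_pE presheaf_iso_vass_pQ_pE by blast+
qed

end
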